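(* Let $p=(p_0,\dots,p_{m-1})\in\{0,1\}^m$, $m\ge1$, and let $\tilde c_\infty[p]$ be the limit of the reverse CQCA evolution started from the $v_p$-periodic initial configuration $\tilde c_0[p]$. Then every cell $(x,0)$ with $x\le0$ has a defined sum bit $b_{-x}$ in $\tilde c_\infty[p]$, and the 2-adic integer $\sum_{j\ge0}b_j2^j\in\mathbb{Z}_2$ equals $Q^{-1}(p^\infty)$, the Collatz cyclic number associated to $p$.
   Context: $\mathbb{Z}_2$ is the ring of 2-adic integers. The Collatz map extends to $T:\mathbb{Z}_2\to\mathbb{Z}_2$, $T(z)=z/2$ if $z\equiv0\pmod2$ and $T(z)=(3z+1)/2$ otherwise. $Q:\mathbb{Z}_2\to\{0,1\}^{\mathbb{N}}$, $Q(z)=(T^i(z)\bmod2)_{i\ge0}$, is a bijection (known fact). $p^\infty$ denotes the infinite periodic sequence $pp p\cdots$; $Q^{-1}(p^\infty)$ is the Collatz cyclic number associated to $p$. Notation: $E=(1,0)$, $W=(-1,0)$, $N=(0,1)$, $S=(0,-1)$; $[P]\in\{0,1\}$ equals $1$ iff $P$ holds. States: $\Sigma=\{0,1,\bot\}^2\setminus\{(\bot,0),(\bot,1)\}$, $(s,c)$ with sum bit $s$ and carry bit $c$; undefined if $(\bot,\bot)$, half-defined if $s\in\{0,1\},c=\bot$, defined if $s,c\in\{0,1\}$. The reverse CQCA: one step $F(C)$ of $C:\mathbb{Z}^2\to\Sigma$ first applies the non-local rule giving $C'$: $C'(u)=(0,1)$ if $C(u+W)=(1,\bot)$, $C(u)\in\{(0,\bot),(\bot,\bot)\}$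 and $C(u+iE)\in\{(0,\bot),(\bot,\bot)\}$ for all $i\ge1$; otherwise $C'(u)=C(u)$. Then the local rule on $C'$ at all cells simultaneously: (i) if $C'(u)=(s,\bot)$ half-defined and $C'(u+E)=(s',c')$ defined, $F(C)(u)=(s,[s+s'+c'\ge2])$; (ii) if $C'(u)=(\bot,\bot)$, $C'(u+E)=(s',c')$ is defined and $C'(u+S)$ has sum bit $s''\in\{0,1\}$, then $F(C)(u)=(t,[t+s'+c'\ge2])$ with $t=(s''+s'+c')\bmod2$; (iii) otherwise $F(C)(u)=C'(u)$. Cyclic world: let $k$ be the number of $1$s in $p$ and $v_p=(-m,-k)$. Positions $u_0=(0,0)$, $u_{i+1}=u_i+W$ if $p_i=0$ and $u_{i+1}=u_i+W+S$ if $p_i=1$ (so $u_m=u_0+v_p$). The configuration $\tilde c_0[p]$ is defined by $\tilde c_0[p](u_i+tv_p)=(p_i,\bot)$ for $0\le i<m$, $t\in\mathbb{Z}$, and $(\bot,\bot)$ at all other cells; it is invariant under translation by $v_p$ (equivalently it lives on $\mathbb{Z}^2$ modulo $v_p$), and this invariance is preserved by $F$. Each cell's state in $F^i(\tilde c_0[p])$ is eventually constant; $\tilde c_\infty[p]$ is the pointwise limit. *)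

theory Defs
  imports Main
begin

typedef z2 = "{a :: nat \<Rightarrow> int. \<forall>n. 0 \<le> a n \<and> a n < 2 ^ n \<and> a (Suc n) mod 2 ^ n = a n}"
  by (rule exI[of _ "\<lambda>_. 0"]) simp

definition z2_mod2 :: "z2 \<Rightarrow> nat" where
  "z2_mod2 z = nat (Rep_z2 z 1 mod 2)"

definition collatzT :: "z2 \<Rightarrow> z2" where
  "collatzT z = Abs_z2 (\<lambda>n. if even (Rep_z2 z 1) then Rep_z2 z (Suc n) div 2
                            else ((3 * Rep_z2 z (Suc n) + 1) div 2) mod 2 ^ n)"

definition parityQ :: "z2 \<Rightarrow> (nat \<Rightarrow> nat)" where
  "parityQ z = (\<lambda>i. z2_mod2 ((collatzT ^^ i) z))"

definition z2_of_digits :: "(nat \<Rightarrow> bool) \<Rightarrow> z2" where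
  "z2_of_digits b = Abs_z2 (\<lambda>n. \<Sum>j<n. of_bool (b j) * 2 ^ j)"

definition periodic_seq :: "bool list \<Rightarrow> nat \<Rightarrow> nat" where
  "periodic_seq p = (\<lambda>i. of_bool (p ! (i mod length p)))"

definition collatz_cyclic :: "bool list \<Rightarrow> z2" where
  "collatz_cyclic p = inv parityQ (periodic_seq p)"

text \<open>States: Undef = (\<bottom>,\<bottom>), Half s = (s,\<bottom>), Def s c = (s,c); bits as bool (True = 1).\<close>
datatype st = Undef | Half bool | Def bool bool

type_synonym config = "int \<times> int \<Rightarrow> st"

definition dirE :: "int \<times> int" where "dirE = (1, 0)"
definition dirW :: "int \<times> int" where "dirW = (-1, 0)"
definition dirS :: "int \<times> int" where "dirS = (0, -1)"

definition vadd :: "int \<times> int \<Rightarrow> int \<times> int \<Rightarrow> int \<times> int" where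
  "vadd u w = (fst u + fst w, snd u + snd w)"

definition vscale :: "int \<Rightarrow> int \<times> int \<Rightarrow> int \<times> int" where
  "vscale t w = (t * fst w, t * snd w)"

fun sumbit :: "st \<Rightarrow> bool option" where
  "sumbit Undef = None"
| "sumbit (Half s) = Some s"
| "sumbit (Def s c) = Some s"

definition zero_or_undef :: "st \<Rightarrow> bool" where
  "zero_or_undef x \<longleftrightarrow> x = Half False \<or> x = Undef"

definition nonlocal_step :: "config \<Rightarrow> config" where
  "nonlocal_step C = (\<lambda>u.
     if C (vadd u dirW) = Half True \<and> zero_or_undef (C u)
        \<and> (\<forall>i::int. i \<ge> 1 \<longrightarrow> zero_or_undef (C (vadd u (vscale i dirE))))
     then Def False True else C u)"

definition local_step :: "config \<Rightarrow> config" where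
  "local_step C' = (\<lambda>u.
     case (C' u, C' (vadd u dirE)) of
       (Half s, Def s' c') \<Rightarrow>
          Def s (of_bool s + of_bool s' + of_bool c' \<ge> (2::nat))
     | (Undef, Def s' c') \<Rightarrow>
          (case sumbit (C' (vadd u dirS)) of
             Some s'' \<Rightarrow>
               (let t = odd (of_bool s'' + of_bool s' + of_bool c' :: nat)
                in Def t (of_bool t + of_bool s' + of_bool c' \<ge> (2::nat)))
           | None \<Rightarrow> C' u)
     | _ \<Rightarrow> C' u)"

definition cqca_step :: "config \<Rightarrow> config" where
  "cqca_step C = local_step (nonlocal_step C)"

definition num_ones :: "bool list \<Rightarrow> nat" where
  "num_ones p = length (filter id p)"

definition vp :: "bool list \<Rightarrow> int \<times> int" where
  "vp p = (- int (length p), - int (num_ones p))"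

fun upos :: "bool list \<Rightarrow> nat \<Rightarrow> int \<times> int" where
  "upos p 0 = (0, 0)"
| "upos p (Suc i) = (if p ! i then vadd (vadd (upos p i) dirW) dirS else vadd (upos p i) dirW)"

definition init_config :: "bool list \<Rightarrow> config" where
  "init_config p = (\<lambda>u.
     if \<exists>i t. i < length p \<and> u = vadd (upos p i) (vscale t (vp p))
     then Half (p ! (SOME i. i < length p \<and> (\<exists>t. u = vadd (upos p i) (vscale t (vp p)))))
     else Undef)"

definition limit_config :: "bool list \<Rightarrow> config" where
  "limit_config p = (\<lambda>u. THE s. \<exists>N. \<forall>n\<ge>N. (cqca_step ^^ n) (init_config p) u = s)"

end

theory Submission
  imports Defs
begin

text \<open>Let \<open>u\<^sub>i = (-i, -k\<^sub>i)\<close> be the staircase carrying the bits of \<open>p\<^sup>\<infinity>\<close> and call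
  row \<open>i\<close> the sum bits of the limit configuration read westwards from \<open>u\<^sub>i\<close>, as the binary
  digits of a 2-adic integer \<open>x\<^sub>i\<close>; row \<open>0\<close> is the digit sequence of the theorem. If
  \<open>p\<^sub>i = 0\<close>, row \<open>i+1\<close> is row \<open>i\<close> without its lowest digit \<open>0\<close>, so \<open>x\<^bsub>i+1\<^esub> = x\<^sub>i/2\<close>. If \<open>p\<^sub>i = 1\<close>,
  the non-local rule seeds a carry \<open>1\<close> just east of \<open>u\<^sub>i\<close>, and the local rule makes row \<open>i\<close>
  a chain of full adders computing \<open>x\<^sub>i + 2x\<^sub>i + 1\<close>, whose digits except the lowest are written
  into row \<open>i+1\<close>; so \<open>x\<^bsub>i+1\<^esub> = (3x\<^sub>i+1)/2\<close>. All cells involved eventually become defined, by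
  induction on their distance to the nearest \<open>(1,\<bottom>)\<close> cell to their east. Thus \<open>x\<^sub>i = T\<^sup>i(x\<^sub>0)\<close>,
  the parity vector of \<open>x\<^sub>0\<close> is \<open>p\<^sup>\<infinity>\<close>, and \<open>x\<^sub>0 = Q\<^sup>-\<^sup>1(p\<^sup>\<infinity>)\<close> because \<open>Q\<close> is injective.\<close>

section \<open>Binary digit sequences and the Collatz map\<close>

definition bits_value :: "(nat \<Rightarrow> bool) \<Rightarrow> nat \<Rightarrow> int" where
  "bits_value b n = (\<Sum>j<n. of_bool (b j) * 2 ^ j)"

lemma bits_value_Suc: "bits_value b (Suc n) = bits_value b n + of_bool (b n) * 2 ^ n"
  by (simp add: bits_value_def)

lemma bits_value_Suc_shift: "bits_value b (Suc n) = of_bool (b 0) + 2 * bits_value (\<lambda>j. b (Suc j)) n"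
  unfolding bits_value_def sum.lessThan_Suc_shift sum_distrib_left
  by (simp add: mult.left_commute)

lemma bits_value_bounds: "0 \<le> bits_value b n" "bits_value b n < 2 ^ n"
proof -
  show "0 \<le> bits_value b n" by (simp add: bits_value_def sum_nonneg)
  show "bits_value b n < 2 ^ n"
  proof (induction n)
    case (Suc n)
    have "bits_value b (Suc n) \<le> bits_value b n + 2 ^ n" by (simp add: bits_value_Suc)
    with Suc show ?case by simp
  qed (simp add: bits_value_def)
qed

lemma Rep_z2_of_digits: "Rep_z2 (z2_of_digits b) = bits_value b"
proof -
  have "bits_value b (Suc n) mod 2 ^ n = bits_value b n" for n
    using bits_value_bounds[of b n] by (simp add: bits_value_Suc)
  then show ?thesis
    unfolding z2_of_digits_def bits_value_def[symmetric, abs_def]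
    by (simp add: Abs_z2_inverse bits_value_bounds)
qed

lemma z2_mod2_of_digits: "z2_mod2 (z2_of_digits b) = of_bool (b 0)"
  by (simp add: z2_mod2_def Rep_z2_of_digits bits_value_def)

lemma collatzT_of_digits_even:
  assumes "\<not> b 0"
  shows "collatzT (z2_of_digits b) = z2_of_digits (\<lambda>j. b (Suc j))"
proof -
  have "bits_value b (Suc n) div 2 = bits_value (\<lambda>j. b (Suc j)) n" for n
    using assms by (simp add: bits_value_Suc_shift)
  moreover have "bits_value b 1 = 0" using assms by (simp add: bits_value_def)
  ultimately show ?thesis
    unfolding collatzT_def Rep_z2_of_digits
    by (simp add: z2_of_digits_def bits_value_def[symmetric, abs_def])
qed

lemma collatzT_of_digits_odd:
  assumes "b 0" and "\<And>n. ((3 * bits_value b (Suc n) + 1) div 2) mod 2 ^ n = bits_value e n"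
  shows "collatzT (z2_of_digits b) = z2_of_digits e"
proof -
  have "bits_value b 1 = 1" using assms(1) by (simp add: bits_value_def)
  then show ?thesis
    unfolding collatzT_def Rep_z2_of_digits
    by (simp add: assms(2) z2_of_digits_def bits_value_def[symmetric, abs_def])
qed

text \<open>The digits \<open>u\<close> of \<open>x\<close> plus the digits of \<open>2x\<close> (the sequence \<open>u\<close> shifted by one),
  with initial carry \<open>c 0 = 1\<close>, give the digits of \<open>3x + 1\<close>, whose lowest digit is \<open>0\<close>;
  \<open>w\<close> lists the remaining ones.\<close>

lemma three_x_plus_one_digits:
  assumes "u 0" "c 0"
    and adder: "\<And>j. of_bool (u (Suc j)) + of_bool (u j) + of_bool (c j)
                      = (of_bool (w j) + 2 * of_bool (c (Suc j)) :: int)"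
  shows "((3 * bits_value u (Suc n) + 1) div 2) mod 2 ^ n = bits_value w n"
proof -
  have chain: "bits_value u (Suc N) + 2 * bits_value u N + 1
                 = 2 * bits_value w N + 2 ^ Suc N * of_bool (c N)" for N
  proof (induction N)
    case 0
    then show ?case using assms(1,2) by (simp add: bits_value_def)
  next
    case (Suc N)
    have "2 ^ Suc N * (of_bool (u (Suc N)) + of_bool (u N) + of_bool (c N))
            = (2 ^ Suc N * (of_bool (w N) + 2 * of_bool (c (Suc N))) :: int)"
      using adder[of N] by simp
    with Suc.IH show ?case
      by (simp add: bits_value_Suc[of u "Suc N"] bits_value_Suc[of u N] bits_value_Suc[of w N]
          algebra_simps)
  qed
  have "3 * bits_value u (Suc n) + 1
          = 2 * (bits_value w n + 2 ^ n * (of_bool (c n) + of_bool (u n)))"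
    using chain[of n] by (simp add: bits_value_Suc algebra_simps)
  then have "(3 * bits_value u (Suc n) + 1) div 2 = bits_value w n + 2 ^ n * (of_bool (c n) + of_bool (u n))"
    by simp
  then show ?thesis using bits_value_bounds[of w n] by simp
qed

section \<open>The parity vector determines the 2-adic integer\<close>

lemma Rep_z2_bounds: "0 \<le> Rep_z2 z n" "Rep_z2 z n < 2 ^ n"
  using Rep_z2[of z] by auto

lemma Rep_z2_Suc_mod: "Rep_z2 z (Suc n) mod 2 ^ n = Rep_z2 z n"
  using Rep_z2[of z] by auto

lemma Rep_z2_mod: "k \<le> n \<Longrightarrow> Rep_z2 z n mod 2 ^ k = Rep_z2 z k"
proof (induction n rule: dec_induct)
  case (step n)
  have "Rep_z2 z (Suc n) mod 2 ^ k = Rep_z2 z (Suc n) mod 2 ^ n mod 2 ^ k"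
    using step.hyps(1) by (simp add: mod_mod_cancel le_imp_power_dvd)
  with step.IH show ?case by (simp add: Rep_z2_Suc_mod)
qed (use Rep_z2_bounds in simp)

lemma div2_mod_pow2: "(x div 2) mod 2 ^ n = (x mod 2 ^ Suc n) div 2" for x :: int
  using zmod_zmult2_eq[of "2 ^ n" x 2] by (simp add: mult.commute)

lemma affine_halves_in_z2:
  "(\<lambda>n. ((a * Rep_z2 z (Suc n) + b) mod 2 ^ Suc n) div 2)
     \<in> {f :: nat \<Rightarrow> int. \<forall>n. 0 \<le> f n \<and> f n < 2 ^ n \<and> f (Suc n) mod 2 ^ n = f n}"
proof (intro CollectI allI conjI)
  fix n
  show "0 \<le> ((a * Rep_z2 z (Suc n) + b) mod 2 ^ Suc n) div 2" by simp
  show "((a * Rep_z2 z (Suc n) + b) mod 2 ^ Suc n) div 2 < 2 ^ n"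
    unfolding div2_mod_pow2[symmetric] by simp
  have "(a * Rep_z2 z (Suc (Suc n)) + b) mod 2 ^ Suc n = (a * Rep_z2 z (Suc n) + b) mod 2 ^ Suc n"
    by (metis Rep_z2_Suc_mod mod_add_left_eq mod_mult_right_eq)
  then show "((a * Rep_z2 z (Suc (Suc n)) + b) mod 2 ^ Suc (Suc n)) div 2 mod 2 ^ n
               = ((a * Rep_z2 z (Suc n) + b) mod 2 ^ Suc n) div 2"
    by (simp add: div2_mod_pow2 mod_mod_cancel)
qed

lemma Rep_collatzT:
  "Rep_z2 (collatzT z) n
     = ((if even (Rep_z2 z 1) then Rep_z2 z (Suc n) else 3 * Rep_z2 z (Suc n) + 1) mod 2 ^ Suc n) div 2"
proof -
  define a :: int where "a = (if even (Rep_z2 z 1) then 1 else 3)"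
  define b :: int where "b = (if even (Rep_z2 z 1) then 0 else 1)"
  have "(if even (Rep_z2 z 1) then Rep_z2 z (Suc n) div 2
         else ((3 * Rep_z2 z (Suc n) + 1) div 2) mod 2 ^ n)
        = ((a * Rep_z2 z (Suc n) + b) mod 2 ^ Suc n) div 2" for n
    using Rep_z2_bounds[of z "Suc n"] by (simp add: a_def b_def div2_mod_pow2)
  then have "collatzT z = Abs_z2 (\<lambda>n. ((a * Rep_z2 z (Suc n) + b) mod 2 ^ Suc n) div 2)"
    unfolding collatzT_def by (simp only:)
  then have "Rep_z2 (collatzT z) n = ((a * Rep_z2 z (Suc n) + b) mod 2 ^ Suc n) div 2"
    by (simp add: Abs_z2_inverse[OF affine_halves_in_z2] del: power_Suc)
  then show ?thesis by (simp add: a_def b_def)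
qed

lemma mod_pow2_eq_by_halves:
  fixes x y :: int
  assumes "x mod 2 = y mod 2" and "(x mod 2 ^ Suc n) div 2 = (y mod 2 ^ Suc n) div 2"
  shows "x mod 2 ^ Suc n = y mod 2 ^ Suc n"
proof -
  have "v mod 2 ^ Suc n = 2 * ((v mod 2 ^ Suc n) div 2) + v mod 2" for v :: int
    by (metis add.commute div_mult_mod_eq mod_mod_cancel dvd_power mult.commute zero_less_Suc)
  then show ?thesis using assms by metis
qed

lemma parityQ_collatzT: "parityQ (collatzT z) i = parityQ z (Suc i)"
  by (simp add: parityQ_def funpow_swap1)

text \<open>The first \<open>n\<close> parities determine a 2-adic integer modulo \<open>2^n\<close>: one Collatz step
  halves the residue modulo \<open>2^(n+1)\<close> of \<open>z\<close> or of \<open>3z+1\<close>, and multiplication by \<open>3\<close> is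
  invertible modulo powers of \<open>2\<close>.\<close>

lemma Rep_z2_eq_if_parityQ_eq: "parityQ z = parityQ z' \<Longrightarrow> Rep_z2 z n = Rep_z2 z' n"
proof (induction n arbitrary: z z')
  case 0
  then show ?case using Rep_z2_bounds[of z 0] Rep_z2_bounds[of z' 0] by simp
next
  case (Suc n)
  let ?x = "Rep_z2 z (Suc n)" and ?y = "Rep_z2 z' (Suc n)"
  have "z2_mod2 z = z2_mod2 z'"
    using fun_cong[OF Suc.prems, of 0] by (simp add: parityQ_def)
  then have one: "Rep_z2 z 1 = Rep_z2 z' 1"
    using Rep_z2_bounds[of z 1] Rep_z2_bounds[of z' 1] by (simp add: z2_mod2_def)
  have par: "?x mod 2 = ?y mod 2"
    using Rep_z2_mod[of 1 "Suc n" z] Rep_z2_mod[of 1 "Suc n" z'] one by simp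
  have "parityQ (collatzT z) = parityQ (collatzT z')"
    using Suc.prems by (simp add: fun_eq_iff parityQ_collatzT)
  then have "Rep_z2 (collatzT z) n = Rep_z2 (collatzT z') n" by (rule Suc.IH)
  then have halves: "((if even (Rep_z2 z 1) then ?x else 3 * ?x + 1) mod 2 ^ Suc n) div 2
                   = ((if even (Rep_z2 z 1) then ?y else 3 * ?y + 1) mod 2 ^ Suc n) div 2"
    by (simp only: Rep_collatzT one)
  have "?x mod 2 ^ Suc n = ?y mod 2 ^ Suc n"
  proof (cases "even (Rep_z2 z 1)")
    case True
    with halves have "(?x mod 2 ^ Suc n) div 2 = (?y mod 2 ^ Suc n) div 2" by simp
    then show ?thesis by (rule mod_pow2_eq_by_halves[OF par])
  next
    case False
    have "(3 * ?x + 1) mod 2 = (3 * ?y + 1) mod 2"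
      using par by (metis mod_add_left_eq mod_mult_right_eq)
    moreover have "((3 * ?x + 1) mod 2 ^ Suc n) div 2 = ((3 * ?y + 1) mod 2 ^ Suc n) div 2"
      using halves False by simp
    ultimately have "(3 * ?x + 1) mod 2 ^ Suc n = (3 * ?y + 1) mod 2 ^ Suc n"
      by (rule mod_pow2_eq_by_halves)
    then have "2 ^ Suc n dvd 3 * (?x - ?y)"
      by (simp add: mod_eq_dvd_iff algebra_simps)
    moreover have "coprime ((2::int) ^ Suc n) 3" by simp
    ultimately have "2 ^ Suc n dvd ?x - ?y"
      using coprime_dvd_mult_right_iff by blast
    then show ?thesis by (simp add: mod_eq_dvd_iff)
  qed
  then show ?case
    using Rep_z2_bounds[of z "Suc n"] Rep_z2_bounds[of z' "Suc n"] by simp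
qed

lemma inj_parityQ: "inj parityQ"
proof (rule injI)
  fix z z' :: z2
  assume "parityQ z = parityQ z'"
  then have "Rep_z2 z = Rep_z2 z'" using Rep_z2_eq_if_parityQ_eq by blast
  then show "z = z'" by (simp add: Rep_z2_inject)
qed

section \<open>Persistence of defined cells and the limit configuration\<close>

fun is_Def :: "st \<Rightarrow> bool" where
  "is_Def (Def _ _) = True"
| "is_Def _ = False"

fun carry :: "st \<Rightarrow> bool" where
  "carry (Def _ c) = c"
| "carry _ = False"

lemma vadd_dir_simps [simp]:
  "vadd (a, b) dirE = (a + 1, b)" "vadd (a, b) dirW = (a - 1, b)" "vadd (a, b) dirS = (a, b - 1)"
  "vadd (a, b) (vscale i dirE) = (a + i, b)"
  by (simp_all add: vadd_def dirE_def dirW_def dirS_def vscale_def)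

definition adder_sum :: "bool \<Rightarrow> bool \<Rightarrow> bool \<Rightarrow> bool" where
  "adder_sum a b c \<longleftrightarrow> odd (of_bool a + of_bool b + of_bool c :: nat)"

definition adder_carry :: "bool \<Rightarrow> bool \<Rightarrow> bool \<Rightarrow> bool" where
  "adder_carry a b c \<longleftrightarrow> 2 \<le> (of_bool a + of_bool b + of_bool c :: nat)"

lemma adder_sum_carry:
  "of_bool (adder_sum a b c) + of_bool b + of_bool c
     = (of_bool a + 2 * of_bool (adder_carry (adder_sum a b c) b c) :: int)"
  by (cases a; cases b; cases c) (simp_all add: adder_sum_def adder_carry_def)

lemma local_step_Def: "C u = Def s c \<Longrightarrow> local_step C u = Def s c"
  by (simp add: local_step_def)

lemma nonlocal_step_Def: "C u = Def s c \<Longrightarrow> nonlocal_step C u = Def s c"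
  by (simp add: nonlocal_step_def zero_or_undef_def)

lemma cqca_step_Def: "C u = Def s c \<Longrightarrow> cqca_step C u = Def s c"
  by (simp add: cqca_step_def nonlocal_step_Def local_step_Def)

lemma sumbit_local_step: "sumbit (C u) \<noteq> None \<Longrightarrow> sumbit (local_step C u) = sumbit (C u)"
  by (cases "C u") (auto simp: local_step_def split: st.split)

lemma sumbit_nonlocal_step: "sumbit (C u) \<noteq> None \<Longrightarrow> sumbit (nonlocal_step C u) = sumbit (C u)"
  by (auto simp: nonlocal_step_def zero_or_undef_def)

lemma sumbit_cqca_step: "sumbit (C u) = Some s \<Longrightarrow> sumbit (cqca_step C u) = Some s"
  by (simp add: cqca_step_def sumbit_local_step sumbit_nonlocal_step)

lemma local_step_Undef:
  "C u = Undef \<Longrightarrow> local_step C u =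
     (case (C (vadd u dirE), sumbit (C (vadd u dirS))) of
        (Def s' c', Some s'') \<Rightarrow> Def (adder_sum s'' s' c') (adder_carry (adder_sum s'' s' c') s' c')
      | _ \<Rightarrow> Undef)"
  by (simp add: local_step_def adder_sum_def adder_carry_def Let_def split: st.split option.split)

lemma cqca_step_unchanged_or_Def: "cqca_step C u = C u \<or> is_Def (cqca_step C u)"
proof -
  have local: "local_step C' u = C' u \<or> is_Def (local_step C' u)" for C'
    by (auto simp: local_step_def Let_def split: st.split option.split)
  have "nonlocal_step C u = C u \<or> nonlocal_step C u = Def False True"
    by (simp add: nonlocal_step_def)
  then show ?thesis
    using local[of "nonlocal_step C"] local_step_Def[of "nonlocal_step C" u False True]
    by (auto simp: cqca_step_def)
qed

lemma cqca_step_Undef_to_Def: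
  assumes "C u = Undef" "C (vadd u dirE) = Def s' c'" "sumbit (C (vadd u dirS)) = Some s''"
  shows "is_Def (cqca_step C u)"
proof -
  let ?C' = "nonlocal_step C"
  have "?C' (vadd u dirE) = Def s' c'" using assms(2) by (rule nonlocal_step_Def)
  moreover have "sumbit (?C' (vadd u dirS)) = Some s''"
    using assms(3) by (simp add: sumbit_nonlocal_step)
  moreover have "?C' u = Undef \<or> ?C' u = Def False True"
    using assms(1) by (simp add: nonlocal_step_def)
  ultimately show ?thesis
    by (auto simp: cqca_step_def local_step_Undef dest: local_step_Def)
qed

lemma cqca_step_becomes_Def:
  assumes "C u = Undef" and "cqca_step C u = Def s c"
  shows "(C (vadd u dirW) = Half True \<and> \<not> s \<and> c)
    \<or> (\<exists>s' c' s''. cqca_step C (vadd u dirE) = Def s' c' \<and> sumbit (cqca_step C (vadd u dirS)) = Some s''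
          \<and> s = adder_sum s'' s' c' \<and> c = adder_carry s s' c')"
proof (cases "nonlocal_step C u = C u")
  case True
  let ?C' = "nonlocal_step C"
  have "local_step ?C' u = Def s c" using assms(2) by (simp add: cqca_step_def)
  then obtain s' c' s'' where E: "?C' (vadd u dirE) = Def s' c'" and S: "sumbit (?C' (vadd u dirS)) = Some s''"
    and "s = adder_sum s'' s' c'" "c = adder_carry s s' c'"
    using True assms(1) by (auto simp: local_step_Undef split: st.splits option.splits)
  moreover have "cqca_step C (vadd u dirE) = Def s' c'"
    using E by (simp add: cqca_step_def local_step_Def)
  moreover have "sumbit (cqca_step C (vadd u dirS)) = Some s''"
    using S by (simp add: cqca_step_def sumbit_local_step)
  ultimately show ?thesis by blast
next
  case False
  then have "nonlocal_step C u = Def False True" and "C (vadd u dirW) = Half True"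
    by (simp_all add: nonlocal_step_def split: if_splits)
  moreover have "cqca_step C u = Def False True"
    using calculation(1) by (simp add: cqca_step_def local_step_Def)
  ultimately show ?thesis using assms(2) by simp
qed

lemma is_Def_iff: "is_Def x \<longleftrightarrow> (\<exists>s c. x = Def s c)"
  by (cases x) auto

lemma funpow_cqca_step_Def:
  assumes "(cqca_step ^^ n) C u = Def s c" and "n \<le> k"
  shows "(cqca_step ^^ k) C u = Def s c"
  using assms(2) by (induction k rule: dec_induct) (simp_all add: assms(1) cqca_step_Def)

lemma sumbit_funpow_cqca_step:
  assumes "sumbit ((cqca_step ^^ n) C u) = Some s" and "n \<le> k"
  shows "sumbit ((cqca_step ^^ k) C u) = Some s"
  using assms(2) by (induction k rule: dec_induct) (simp_all add: assms(1) sumbit_cqca_step)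

lemma funpow_cqca_step_initial_or_Def:
  "(cqca_step ^^ n) C u = C u \<or> is_Def ((cqca_step ^^ n) C u)"
proof (induction n)
  case (Suc n)
  then show ?case
    using cqca_step_unchanged_or_Def[of "(cqca_step ^^ n) C" u]
    by (auto simp: is_Def_iff cqca_step_Def)
qed simp

lemma funpow_cqca_step_eventually_const:
  "\<exists>N. \<forall>n\<ge>N. (cqca_step ^^ n) C u = (cqca_step ^^ N) C u"
proof (cases "\<exists>N. is_Def ((cqca_step ^^ N) C u)")
  case True
  then obtain N s c where "(cqca_step ^^ N) C u = Def s c" by (auto simp: is_Def_iff)
  then show ?thesis by (metis funpow_cqca_step_Def)
next
  case False
  then show ?thesis using funpow_cqca_step_initial_or_Def[of _ C u] by auto
qed

lemma funpow_cqca_step_becomes_Def: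
  assumes "C u = Undef" and "(cqca_step ^^ n) C u = Def s c"
  shows "\<exists>k. ((cqca_step ^^ k) C (vadd u dirW) = Half True \<and> \<not> s \<and> c)
    \<or> (\<exists>s' c' s''. (cqca_step ^^ k) C (vadd u dirE) = Def s' c'
          \<and> sumbit ((cqca_step ^^ k) C (vadd u dirS)) = Some s''
          \<and> s = adder_sum s'' s' c' \<and> c = adder_carry s s' c')"
  using assms(2)
proof (induction n)
  case 0
  with assms(1) show ?case by simp
next
  case (Suc n)
  show ?case
  proof (cases "is_Def ((cqca_step ^^ n) C u)")
    case True
    then obtain s0 c0 where D: "(cqca_step ^^ n) C u = Def s0 c0" by (auto simp: is_Def_iff)
    then have "(cqca_step ^^ Suc n) C u = Def s0 c0" by (simp add: cqca_step_Def)
    with D Suc.prems have "(cqca_step ^^ n) C u = Def s c" by simp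
    then show ?thesis by (rule Suc.IH)
  next
    case False
    then have "(cqca_step ^^ n) C u = Undef"
      using funpow_cqca_step_initial_or_Def[of n C u] assms(1) by simp
    moreover have "cqca_step ((cqca_step ^^ n) C) u = Def s c" using Suc.prems by simp
    ultimately have "((cqca_step ^^ n) C (vadd u dirW) = Half True \<and> \<not> s \<and> c)
      \<or> (\<exists>s' c' s''. (cqca_step ^^ Suc n) C (vadd u dirE) = Def s' c'
          \<and> sumbit ((cqca_step ^^ Suc n) C (vadd u dirS)) = Some s''
          \<and> s = adder_sum s'' s' c' \<and> c = adder_carry s s' c')"
      by (simp only: funpow.simps comp_apply cqca_step_becomes_Def)
    then show ?thesis
    proof
      assume "(cqca_step ^^ n) C (vadd u dirW) = Half True \<and> \<not> s \<and> c"
      then show ?thesis by (intro exI[of _ n] disjI1)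
    next
      assume "\<exists>s' c' s''. (cqca_step ^^ Suc n) C (vadd u dirE) = Def s' c'
          \<and> sumbit ((cqca_step ^^ Suc n) C (vadd u dirS)) = Some s''
          \<and> s = adder_sum s'' s' c' \<and> c = adder_carry s s' c'"
      then show ?thesis by (intro exI[of _ "Suc n"] disjI2)
    qed
  qed
qed

abbreviation cqca_orbit :: "bool list \<Rightarrow> nat \<Rightarrow> config" where
  "cqca_orbit p n \<equiv> (cqca_step ^^ n) (init_config p)"

lemma limit_config_eqI:
  assumes "\<forall>n\<ge>N. cqca_orbit p n u = v"
  shows "limit_config p u = v"
  unfolding limit_config_def
proof (rule the_equality)
  fix v' assume "\<exists>N'. \<forall>n\<ge>N'. cqca_orbit p n u = v'"
  then obtain N' where "\<forall>n\<ge>N'. cqca_orbit p n u = v'" by blast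
  then have "cqca_orbit p (max N N') u = v'" by (meson max.cobounded2)
  moreover have "cqca_orbit p (max N N') u = v" using assms by (meson max.cobounded1)
  ultimately show "v' = v" by simp
qed (use assms in blast)

lemma cqca_orbit_limit: "\<exists>N. \<forall>n\<ge>N. cqca_orbit p n u = limit_config p u"
proof -
  obtain N where "\<forall>n\<ge>N. cqca_orbit p n u = cqca_orbit p N u"
    using funpow_cqca_step_eventually_const by blast
  moreover from this have "limit_config p u = cqca_orbit p N u" by (rule limit_config_eqI)
  ultimately show ?thesis by metis
qed

lemma limit_config_Def: "cqca_orbit p n u = Def s c \<Longrightarrow> limit_config p u = Def s c"
  by (rule limit_config_eqI) (blast intro: funpow_cqca_step_Def)

lemma sumbit_limit_config:
  assumes "sumbit (cqca_orbit p n u) = Some s"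
  shows "sumbit (limit_config p u) = Some s"
proof -
  obtain N where "\<forall>k\<ge>N. cqca_orbit p k u = limit_config p u"
    using cqca_orbit_limit by blast
  then have "cqca_orbit p (max n N) u = limit_config p u" by (meson max.cobounded2)
  with sumbit_funpow_cqca_step[OF assms, of "max n N"] show ?thesis by simp
qed

lemma limit_config_becomes_Def:
  assumes "init_config p u = Undef" and "limit_config p u = Def s c"
  shows "(init_config p (vadd u dirW) = Half True \<and> \<not> s \<and> c)
    \<or> (\<exists>s' c' s''. limit_config p (vadd u dirE) = Def s' c'
          \<and> sumbit (limit_config p (vadd u dirS)) = Some s''
          \<and> s = adder_sum s'' s' c' \<and> c = adder_carry s s' c')"
proof -
  obtain N where "\<forall>n\<ge>N. cqca_orbit p n u = limit_config p u"
    using cqca_orbit_limit by blast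
  then have "cqca_orbit p N u = limit_config p u" by (meson order_refl)
  with assms(2) have "cqca_orbit p N u = Def s c" by simp
  from funpow_cqca_step_becomes_Def[where C = "init_config p", OF assms(1) this]
  obtain k where
    "(cqca_orbit p k (vadd u dirW) = Half True \<and> \<not> s \<and> c)
      \<or> (\<exists>s' c' s''. cqca_orbit p k (vadd u dirE) = Def s' c'
          \<and> sumbit (cqca_orbit p k (vadd u dirS)) = Some s''
          \<and> s = adder_sum s'' s' c' \<and> c = adder_carry s s' c')" ..
  then show ?thesis
  proof (elim disjE exE conjE)
    assume W: "cqca_orbit p k (vadd u dirW) = Half True" and "\<not> s" c
    then have "init_config p (vadd u dirW) = Half True"
      using funpow_cqca_step_initial_or_Def[of k "init_config p" "vadd u dirW"] by auto
    with \<open>\<not> s\<close> \<open>c\<close> show ?thesis by blast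
  next
    fix s' c' s''
    assume E: "cqca_orbit p k (vadd u dirE) = Def s' c'"
      and S: "sumbit (cqca_orbit p k (vadd u dirS)) = Some s''"
      and "s = adder_sum s'' s' c'" "c = adder_carry s s' c'"
    with limit_config_Def[OF E] sumbit_limit_config[OF S] show ?thesis
      by (intro disjI2 exI[of _ s'] exI[of _ c'] exI[of _ s''] conjI)
  qed
qed

lemma limit_config_initial_or_Def: "limit_config p u = init_config p u \<or> is_Def (limit_config p u)"
proof -
  obtain N where "\<forall>n\<ge>N. cqca_orbit p n u = limit_config p u"
    using cqca_orbit_limit by blast
  then have "cqca_orbit p N u = limit_config p u" by (meson order_refl)
  then show ?thesis using funpow_cqca_step_initial_or_Def[of N "init_config p" u] by simp
qed

lemma limit_config_not_Undef:
  assumes "limit_config p (vadd u dirE) = Def s' c'" and "sumbit (limit_config p (vadd u dirS)) = Some s''"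
  shows "limit_config p u \<noteq> Undef"
proof
  assume undef: "limit_config p u = Undef"
  obtain N1 N2 N3 where "\<forall>n\<ge>N1. cqca_orbit p n u = limit_config p u"
    and "\<forall>n\<ge>N2. cqca_orbit p n (vadd u dirE) = limit_config p (vadd u dirE)"
    and "\<forall>n\<ge>N3. cqca_orbit p n (vadd u dirS) = limit_config p (vadd u dirS)"
    using cqca_orbit_limit by meson
  moreover define N where "N = max N1 (max N2 N3)"
  ultimately have "cqca_orbit p N u = Undef" and Suc: "cqca_orbit p (Suc N) u = Undef"
    and "cqca_orbit p N (vadd u dirE) = Def s' c'" "sumbit (cqca_orbit p N (vadd u dirS)) = Some s''"
    using undef assms by (simp_all only: N_def max.bounded_iff le_SucI order_refl)
  then have "is_Def (cqca_step (cqca_orbit p N) u)"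
    by (intro cqca_step_Undef_to_Def)
  with Suc show False by simp
qed

section \<open>The staircase of the initial configuration\<close>

definition pbit :: "bool list \<Rightarrow> int \<Rightarrow> bool" where
  "pbit p i = p ! nat (i mod int (length p))"

text \<open>\<open>ones_count p i\<close> is \<open>k\<^sub>i\<close>, the number of ones among the first \<open>i\<close> bits of \<open>p\<^sup>\<infinity>\<close>,
  extended additively to negative \<open>i\<close>; see \<open>init_config_eq\<close>.\<close>

definition ones_count :: "bool list \<Rightarrow> int \<Rightarrow> int" where
  "ones_count p i = int (num_ones (take (nat (i mod int (length p))) p))
                    + i div int (length p) * int (num_ones p)"

lemma ones_count_0 [simp]: "ones_count p 0 = 0"
  by (simp add: ones_count_def num_ones_def)

lemma num_ones_take_Suc: "j < length p \<Longrightarrow> num_ones (take (Suc j) p) = num_ones (take j p) + of_bool (p ! j)"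
  by (simp add: num_ones_def take_Suc_conv_app_nth)

definition row_cell :: "bool list \<Rightarrow> int \<Rightarrow> nat \<Rightarrow> int \<times> int" where
  "row_cell p i j = (- (i + int j), - ones_count p i)"

definition row_digits :: "bool list \<Rightarrow> int \<Rightarrow> nat \<Rightarrow> bool" where
  "row_digits p i j = the (sumbit (limit_config p (row_cell p i j)))"

definition row_carries :: "bool list \<Rightarrow> int \<Rightarrow> nat \<Rightarrow> bool" where
  "row_carries p i j = carry (limit_config p (row_cell p i j))"

context
  fixes p :: "bool list"
  assumes p_ne: "p \<noteq> []"
begin

lemma ones_count_succ: "ones_count p (i + 1) = ones_count p i + of_bool (pbit p i)"
proof -
  let ?m = "int (length p)"
  define q r where "q = i div ?m" and "r = i mod ?m"
  have m: "0 < ?m" using p_ne by simp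
  then have r: "0 \<le> r" "r < ?m" by (simp_all add: r_def)
  have i: "i + 1 = (r + 1) + q * ?m" by (simp add: q_def r_def)
  have div: "(i + 1) div ?m = q + (r + 1) div ?m"
    unfolding i using m by (intro div_mult_self1) simp
  have mod: "(i + 1) mod ?m = (r + 1) mod ?m"
    unfolding i by (rule mod_mult_self1)
  have ones_r: "num_ones (take (Suc (nat r)) p) = num_ones (take (nat r) p) + of_bool (p ! nat r)"
    using r by (intro num_ones_take_Suc) linarith
  have old: "ones_count p i = int (num_ones (take (nat r) p)) + q * int (num_ones p)"
    and bit: "pbit p i = p ! nat r"
    by (simp_all add: ones_count_def pbit_def q_def r_def)
  show ?thesis
  proof (cases "r + 1 = ?m")
    case True
    then have "take (Suc (nat r)) p = p" by simp
    with ones_r have all: "int (num_ones p) = int (num_ones (take (nat r) p)) + of_bool (p ! nat r)"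
      by simp
    have "ones_count p (i + 1) = (q + 1) * int (num_ones p)"
      unfolding ones_count_def div mod using True m by (simp add: num_ones_def)
    then show ?thesis by (simp add: old bit all algebra_simps)
  next
    case False
    with r have "(r + 1) div ?m = 0" "(r + 1) mod ?m = r + 1" by simp_all
    with r have "ones_count p (i + 1) = int (num_ones (take (Suc (nat r)) p)) + q * int (num_ones p)"
      unfolding ones_count_def div mod by (simp add: Suc_nat_eq_nat_zadd1 add.commute)
    then show ?thesis by (simp add: ones_r old bit)
  qed
qed

lemma ones_count_add_period: "ones_count p (i + t * int (length p)) = ones_count p i + t * int (num_ones p)"
  using p_ne by (simp add: ones_count_def algebra_simps)

lemma ones_count_mono: "i \<le> j \<Longrightarrow> ones_count p i \<le> ones_count p j"
proof (induction j rule: int_ge_induct)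
  case (step j)
  then show ?case by (simp add: ones_count_succ)
qed simp

lemma ones_count_ivt:
  assumes "j \<le> i" "ones_count p j \<le> c" "c < ones_count p i"
  shows "\<exists>l. j \<le> l \<and> l < i \<and> ones_count p l = c \<and> pbit p l"
  using assms
proof (induction i rule: int_ge_induct)
  case (step i)
  show ?case
  proof (cases "c < ones_count p i")
    case True
    with step show ?thesis by fastforce
  next
    case False
    with step.prems(2) have "pbit p i" "ones_count p i = c"
      by (cases "pbit p i"; simp add: ones_count_succ)+
    with step.hyps show ?thesis by (intro exI[of _ i]) simp
  qed
qed simp

lemma upos_eq: "i < length p \<Longrightarrow> upos p i = (- int i, - ones_count p (int i))"
proof (induction i)
  case (Suc i)
  then have "pbit p (int i) = p ! i" by (simp add: pbit_def)
  with Suc show ?case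
    using ones_count_succ[of "int i"] by (simp add: vadd_def dirW_def dirS_def add.commute)
qed simp

lemma init_config_eq:
  "init_config p (x, y) = (if y = - ones_count p (- x) then Half (pbit p (- x)) else Undef)"
proof -
  let ?m = "int (length p)"
  have m: "0 < ?m" using p_ne by simp
  have point: "vadd (upos p i) (vscale t (vp p)) = (- (int i + t * ?m), - ones_count p (int i + t * ?m))"
    if "i < length p" for i t
    using upos_eq[OF that] ones_count_add_period[of "int i" t]
    by (simp add: vadd_def vscale_def vp_def algebra_simps)
  have on_path: "(i < length p \<and> (\<exists>t. (x, y) = vadd (upos p i) (vscale t (vp p))))
      \<longleftrightarrow> y = - ones_count p (- x) \<and> i = nat ((- x) mod ?m)" for i
  proof
    assume "i < length p \<and> (\<exists>t. (x, y) = vadd (upos p i) (vscale t (vp p)))"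
    then obtain t where i: "i < length p" and "(x, y) = vadd (upos p i) (vscale t (vp p))" by blast
    with point[OF i] have x: "- x = int i + t * ?m" and "y = - ones_count p (int i + t * ?m)"
      by (simp_all add: prod_eq_iff)
    then have "y = - ones_count p (- x)" by simp
    moreover have "(- x) mod ?m = int i" unfolding x using i by simp
    ultimately show "y = - ones_count p (- x) \<and> i = nat ((- x) mod ?m)" by simp
  next
    assume y: "y = - ones_count p (- x) \<and> i = nat ((- x) mod ?m)"
    then have i: "i < length p" and "- x = int i + ((- x) div ?m) * ?m" using m by (simp_all add: nat_less_iff)
    then have "(x, y) = vadd (upos p i) (vscale ((- x) div ?m) (vp p))"
      using point[OF i] y by (metis minus_minus)
    with i show "i < length p \<and> (\<exists>t. (x, y) = vadd (upos p i) (vscale t (vp p)))" by blast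
  qed
  have ex: "(\<exists>i t. i < length p \<and> (x, y) = vadd (upos p i) (vscale t (vp p)))
      \<longleftrightarrow> y = - ones_count p (- x)"
    using on_path by blast
  have "(SOME i. i < length p \<and> (\<exists>t. (x, y) = vadd (upos p i) (vscale t (vp p))))
      = nat ((- x) mod ?m)" if "y = - ones_count p (- x)"
    unfolding on_path using that by simp
  then show ?thesis
    unfolding init_config_def ex by (simp add: pbit_def)
qed

text \<open>East of a \<open>(1,\<bottom>)\<close> cell of the staircase the row holds only \<open>(0,\<bottom>)\<close> and
  \<open>(\<bottom>,\<bottom>)\<close> cells, so the non-local rule fires there in the first step.\<close>

lemma cqca_orbit_1_at_one:
  assumes one: "pbit p l"
  shows "cqca_orbit p 1 (- l, - ones_count p l) = Def True True"
proof -
  let ?y = "- ones_count p l"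
  have east: "zero_or_undef (init_config p (- l + 1 + j, ?y))" if "0 \<le> j" for j
  proof (cases "ones_count p (l - 1 - j) = ones_count p l")
    case True
    have "ones_count p (l - 1 - j + 1) \<le> ones_count p l"
      using that by (intro ones_count_mono) simp
    with True have "\<not> pbit p (l - 1 - j)"
      using ones_count_mono[of "l - 1 - j" "l - 1 - j + 1"] ones_count_succ[of "l - 1 - j"]
      by simp
    with True show ?thesis by (simp add: init_config_eq zero_or_undef_def)
  next
    case False
    then show ?thesis by (simp add: init_config_eq zero_or_undef_def)
  qed
  have "nonlocal_step (init_config p) (- l + 1, ?y) = Def False True"
    using east[of 0] east one unfolding nonlocal_step_def
    by (simp add: init_config_eq add.assoc)
  moreover have "nonlocal_step (init_config p) (- l, ?y) = Half True"
    using one by (simp add: nonlocal_step_def init_config_eq zero_or_undef_def)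
  ultimately show ?thesis
    by (simp add: cqca_step_def local_step_def adder_carry_def)
qed

lemma limit_config_at_one: "pbit p l \<Longrightarrow> limit_config p (- l, - ones_count p l) = Def True True"
  by (rule limit_config_Def[OF cqca_orbit_1_at_one])

text \<open>The cells of a row west of a \<open>(1,\<bottom>)\<close> cell of the staircase all become defined:
  by induction on the distance, the eastern neighbour is defined and the southern one has a
  sum bit, being either on the staircase or west of a later \<open>(1,\<bottom>)\<close> cell on the row below.\<close>

lemma limit_config_Def_west_of_one:
  assumes "b < i" "ones_count p b = - y" "pbit p b"
  shows "is_Def (limit_config p (- i, y))"
  using assms
proof (induction "nat (i - b)" arbitrary: i y b rule: less_induct)
  case less
  have next_one: "ones_count p (b + 1) = - y + 1"
    using less.prems ones_count_succ[of b] by simp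
  have above: "ones_count p (b + 1) \<le> ones_count p i"
    using less.prems(1) by (intro ones_count_mono) simp
  obtain s' c' where east: "limit_config p (- i + 1, y) = Def s' c'"
  proof (cases "i - 1 = b")
    case True
    then have "(- i + 1, y) = (- b, - ones_count p b)" using less.prems(2) by simp
    with less.prems(3) have "limit_config p (- i + 1, y) = Def True True"
      using limit_config_at_one[of b] by simp
    with that show ?thesis by blast
  next
    case False
    with less.prems have "is_Def (limit_config p (- (i - 1), y))"
      by (intro less.hyps[of "i - 1" b]) simp_all
    with that show ?thesis by (auto simp: is_Def_iff)
  qed
  obtain s'' where south: "sumbit (limit_config p (- i, y - 1)) = Some s''"
  proof (cases "y - 1 = - ones_count p i")
    case True
    then have "sumbit (cqca_orbit p 0 (- i, y - 1)) = Some (pbit p i)"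
      by (simp add: init_config_eq)
    with that show ?thesis by (blast dest: sumbit_limit_config)
  next
    case False
    with next_one above have "- (y - 1) < ones_count p i" by simp
    then obtain l where "b + 1 \<le> l" "l < i" "ones_count p l = - (y - 1)" "pbit p l"
      using ones_count_ivt[of "b + 1" i "- (y - 1)"] less.prems(1) next_one by auto
    with less.prems have "is_Def (limit_config p (- i, y - 1))"
      by (intro less.hyps[of i l]) simp_all
    with that show ?thesis by (auto simp: is_Def_iff)
  qed
  have "limit_config p (- i, y) \<noteq> Undef"
    using limit_config_not_Undef[of p "(- i, y)"] east south by simp
  moreover have "init_config p (- i, y) = Undef"
    using next_one above by (simp add: init_config_eq)
  ultimately show ?case using limit_config_initial_or_Def[of p "(- i, y)"] by auto
qed

section \<open>The rows of the limit configuration\<close>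

lemma row_digits_0: "row_digits p i 0 = pbit p i"
proof -
  have "sumbit (cqca_orbit p 0 (row_cell p i 0)) = Some (pbit p i)"
    by (simp add: row_cell_def init_config_eq)
  then have "sumbit (limit_config p (row_cell p i 0)) = Some (pbit p i)"
    by (rule sumbit_limit_config)
  then show ?thesis by (simp add: row_digits_def)
qed

lemma row_carries_0: "pbit p i \<Longrightarrow> row_carries p i 0"
  by (simp add: row_carries_def row_cell_def limit_config_at_one)

lemma row_digits_succ_zero: "\<not> pbit p i \<Longrightarrow> row_digits p (i + 1) j = row_digits p i (Suc j)"
  using ones_count_succ[of i] by (simp add: row_digits_def row_cell_def algebra_simps)

text \<open>Behind a \<open>1\<close> of the staircase the local rule acts as a full adder: the row plus its
  shift by one cell, with carries along the row, yields the row below.\<close>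

lemma row_digits_succ_one:
  assumes one: "pbit p i"
  shows "of_bool (row_digits p i (Suc j)) + of_bool (row_digits p i j) + of_bool (row_carries p i j)
           = (of_bool (row_digits p (i + 1) j) + 2 * of_bool (row_carries p i (Suc j)) :: int)"
proof -
  let ?u = "row_cell p i (Suc j)"
  have next_one: "ones_count p (i + 1) = ones_count p i + 1"
    using one ones_count_succ[of i] by simp
  have above: "ones_count p (i + 1) \<le> ones_count p (i + 1 + int j)" for j
    by (intro ones_count_mono) simp
  have "is_Def (limit_config p ?u)"
    unfolding row_cell_def using one by (intro limit_config_Def_west_of_one) simp_all
  then obtain s c where lim: "limit_config p ?u = Def s c" by (auto simp: is_Def_iff)
  have "init_config p ?u = Undef"
    using next_one above[of j] by (simp add: row_cell_def init_config_eq algebra_simps)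
  moreover have "init_config p (vadd ?u dirW) \<noteq> Half True"
    using next_one above[of "Suc j"] by (simp add: row_cell_def init_config_eq algebra_simps)
  ultimately obtain s' c' s'' where "limit_config p (vadd ?u dirE) = Def s' c'"
    and "sumbit (limit_config p (vadd ?u dirS)) = Some s''"
    and sum: "s = adder_sum s'' s' c'" and carry: "c = adder_carry s s' c'"
    using limit_config_becomes_Def[OF _ lim] by blast
  moreover have "vadd ?u dirE = row_cell p i j" "vadd ?u dirS = row_cell p (i + 1) j"
    using next_one by (simp_all add: row_cell_def algebra_simps)
  ultimately have "row_digits p i (Suc j) = s" "row_carries p i (Suc j) = c"
    "row_digits p i j = s'" "row_carries p i j = c'" "row_digits p (i + 1) j = s''"
    using lim by (simp_all add: row_digits_def row_carries_def)
  then show ?thesis using adder_sum_carry[of s'' s' c'] sum carry by simp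
qed

lemma collatzT_row: "collatzT (z2_of_digits (row_digits p i)) = z2_of_digits (row_digits p (i + 1))"
proof (cases "pbit p i")
  case True
  show ?thesis
  proof (rule collatzT_of_digits_odd)
    show "row_digits p i 0" using True by (simp add: row_digits_0)
    show "((3 * bits_value (row_digits p i) (Suc n) + 1) div 2) mod 2 ^ n = bits_value (row_digits p (i + 1)) n" for n
      using True by (intro three_x_plus_one_digits[where c = "row_carries p i"])
        (simp_all add: row_digits_0 row_carries_0 row_digits_succ_one)
  qed
next
  case False
  then have "collatzT (z2_of_digits (row_digits p i)) = z2_of_digits (\<lambda>j. row_digits p i (Suc j))"
    by (intro collatzT_of_digits_even) (simp add: row_digits_0)
  moreover have "(\<lambda>j. row_digits p i (Suc j)) = row_digits p (i + 1)"
    using False by (simp add: fun_eq_iff row_digits_succ_zero)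
  ultimately show ?thesis by simp
qed

lemma parityQ_row_0: "parityQ (z2_of_digits (row_digits p 0)) = periodic_seq p"
proof
  fix k
  have "(collatzT ^^ k) (z2_of_digits (row_digits p 0)) = z2_of_digits (row_digits p (int k))"
    by (induction k) (simp_all add: collatzT_row add.commute)
  then show "parityQ (z2_of_digits (row_digits p 0)) k = periodic_seq p k"
    by (simp add: parityQ_def z2_mod2_of_digits row_digits_0 pbit_def periodic_seq_def nat_mod_distrib)
qed

lemma sumbit_limit_config_axis:
  assumes "x \<le> 0"
  shows "sumbit (limit_config p (x, 0)) \<noteq> None"
proof (cases "ones_count p (- x) = 0")
  case True
  then have "sumbit (cqca_orbit p 0 (x, 0)) = Some (pbit p (- x))"
    by (simp add: init_config_eq)
  then have "sumbit (limit_config p (x, 0)) = Some (pbit p (- x))"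
    by (rule sumbit_limit_config)
  then show ?thesis by simp
next
  case False
  moreover have "0 \<le> ones_count p (- x)"
    using assms ones_count_mono[of 0 "- x"] by simp
  ultimately obtain l where "0 \<le> l" "l < - x" "ones_count p l = 0" "pbit p l"
    using ones_count_ivt[of 0 "- x" 0] assms by auto
  then have "is_Def (limit_config p (- (- x), 0))"
    by (intro limit_config_Def_west_of_one) simp_all
  then show ?thesis by (auto simp: is_Def_iff)
qed

end

theorem mainTheorem12:
  fixes p :: "bool list"
  assumes "length p \<ge> 1"
  shows "(\<forall>x::int. x \<le> 0 \<longrightarrow>
            (\<exists>N. \<forall>n\<ge>N. (cqca_step ^^ n) (init_config p) (x, 0) = limit_config p (x, 0))
          \<and> sumbit (limit_config p (x, 0)) \<noteq> None)
       \<and> z2_of_digits (\<lambda>j. the (sumbit (limit_config p (- int j, 0)))) = collatz_cyclic p"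
proof -
  have p_ne: "p \<noteq> []" using assms by auto
  have row_0: "(\<lambda>j. the (sumbit (limit_config p (- int j, 0)))) = row_digits p 0"
    by (simp add: fun_eq_iff row_digits_def row_cell_def)
  have "z2_of_digits (row_digits p 0) = collatz_cyclic p"
    using inv_f_f[OF inj_parityQ] by (simp add: collatz_cyclic_def parityQ_row_0[OF p_ne, symmetric])
  with row_0 show ?thesis
    using cqca_orbit_limit sumbit_limit_config_axis[OF p_ne] by (intro conjI allI impI) simp_all
qed

end
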